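(* Let $\kappa$ be a cardinal and let $B$ be the set of elements of order exactly $2$ in the group $(\mathbb{R}/\mathbb{Z})^{\oplus\kappa}$. Then $B$, with the partial operation induced from the group, is strongly IP-regular.
   Context: $(\mathbb{R}/\mathbb{Z})^{\oplus\kappa}$ is the direct sum of $\kappa$ copies of the circle group $\mathbb{R}/\mathbb{Z}$, written additively. A subset $X$ carries the induced partial operation: $x+y$ is defined in $X$ iff $x,y,x+y\in X$. For a sequence $\vec{x}=(x_n)_{n\in\omega}$ in $X$ all of whose finite sums $\sum_{i\in a}x_i$ ($a$ finite nonempty subset of $\omega$) lie in $X$, $\mathrm{FS}(\vec{x})$ is the set of these sums and $\mathrm{FS}_1(\vec{x})=\mathrm{FS}((x_{n+1})_n)$; an IP-set of $X$ is a subset containing such an $\mathrm{FS}(\vec{x})$. $X$ is strongly IP-regular if for every such sequence $\vec{x}$, $x_0+\mathrm{FS}_1(\vec{x})$ is not an IP-set. *)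

theory Defs
  imports Complex_Main
begin

text \<open>The circle group R/Z is represented by the interval [0,1) with addition
  modulo 1 (i.e. frac of the real sum). The direct sum of kappa copies of R/Z,
  kappa being the cardinality of the index type 'k, is represented by the set of
  finitely supported functions 'k => [0,1), with coordinatewise addition mod 1.\<close>

definition circ_dsum :: "('k \<Rightarrow> real) set" where
  "circ_dsum = {f. (\<forall>i. 0 \<le> f i \<and> f i < 1) \<and> finite {i. f i \<noteq> 0}}"

definition cadd :: "('k \<Rightarrow> real) \<Rightarrow> ('k \<Rightarrow> real) \<Rightarrow> ('k \<Rightarrow> real)" where
  "cadd f g = (\<lambda>i. frac (f i + g i))"

definition czero :: "'k \<Rightarrow> real" where
  "czero = (\<lambda>i. 0)"

definition csum :: "(nat \<Rightarrow> ('k \<Rightarrow> real)) \<Rightarrow> nat set \<Rightarrow> ('k \<Rightarrow> real)" where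
  "csum x a = (\<lambda>j. frac (\<Sum>i\<in>a. x i j))"

definition order2 :: "('k \<Rightarrow> real) set" where
  "order2 = {f \<in> circ_dsum. f \<noteq> czero \<and> cadd f f = czero}"

definition FS_seq :: "('k \<Rightarrow> real) set \<Rightarrow> (nat \<Rightarrow> ('k \<Rightarrow> real)) \<Rightarrow> bool" where
  "FS_seq X x \<longleftrightarrow> (\<forall>n. x n \<in> X) \<and> (\<forall>a. finite a \<and> a \<noteq> {} \<longrightarrow> csum x a \<in> X)"

definition FS :: "(nat \<Rightarrow> ('k \<Rightarrow> real)) \<Rightarrow> ('k \<Rightarrow> real) set" where
  "FS x = {csum x a | a. finite a \<and> a \<noteq> {}}"

definition FS1 :: "(nat \<Rightarrow> ('k \<Rightarrow> real)) \<Rightarrow> ('k \<Rightarrow> real) set" where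
  "FS1 x = FS (\<lambda>n. x (Suc n))"

definition IP_set :: "('k \<Rightarrow> real) set \<Rightarrow> ('k \<Rightarrow> real) set \<Rightarrow> bool" where
  "IP_set X A \<longleftrightarrow> A \<subseteq> X \<and> (\<exists>y. FS_seq X y \<and> FS y \<subseteq> A)"

definition strongly_IP_regular :: "('k \<Rightarrow> real) set \<Rightarrow> bool" where
  "strongly_IP_regular X \<longleftrightarrow>
     (\<forall>x. FS_seq X x \<longrightarrow> \<not> IP_set X (cadd (x 0) ` FS1 x))"

end

theory Submission
  imports Defs
begin

text \<open>Elements of order 2 have all coordinates in {0, 1/2}, so they are the nonzero vectors of
  a vector space over the field with two elements: a finite sum of the x_i over an index set C is
  determined coordinatewise by parities, and sums over C and C' add up to the sum over the
  symmetric difference of C and C'. If y generates an IP-set inside x_0 + FS_1(x), then y_0, y_1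
  and y_0 + y_1 are sums of x over index sets C_0, C_1, C_2 that all contain 0. Adding the three
  gives 0, i.e. the sum over the symmetric difference of C_0, C_1, C_2 vanishes; but that index
  set contains 0, so its sum is an element of order 2 and hence nonzero.\<close>

lemma order2_coordinate:
  assumes "f \<in> order2"
  shows "f j = 0 \<or> f j = 1/2"
proof -
  from assms have range: "0 \<le> f j" "f j < 1" and "cadd f f = czero"
    by (auto simp: order2_def circ_dsum_def)
  then have "f j + f j \<in> \<int>"
    unfolding cadd_def czero_def by (metis frac_eq_0_iff)
  then obtain k where k: "f j + f j = of_int k"
    by (auto elim: Ints_cases)
  with range have "k = 0 \<or> k = 1"
    by linarith
  with k show ?thesis
    by auto
qed

lemma frac_of_nat_half: "frac (real n / 2) = (if even n then 0 else 1/2)"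
proof (cases "even n")
  case True
  then obtain m where "n = 2 * m"
    by blast
  then show ?thesis
    by simp
next
  case False
  then obtain m where "n = 2 * m + 1"
    using oddE by blast
  then have "frac (real n / 2) = frac (1/2 + of_int (int m))"
    by (simp add: add_divide_distrib)
  also have "\<dots> = 1/2"
    by (simp only: frac_add_of_int_right) (simp add: frac_eq)
  finally show ?thesis
    using False by simp
qed

lemma sum_half_valued:
  assumes "finite a" "\<And>i. i \<in> a \<Longrightarrow> x i j = 0 \<or> x i j = 1/2"
  shows "(\<Sum>i\<in>a. x i j) = real (card {i\<in>a. x i j \<noteq> 0}) / 2"
proof -
  have "(\<Sum>i\<in>a. x i j) = (\<Sum>i\<in>{i\<in>a. x i j \<noteq> 0}. x i j)"
    using assms(1) by (rule sum.mono_neutral_right) auto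
  also have "\<dots> = (\<Sum>i\<in>{i\<in>a. x i j \<noteq> 0}. 1/2)"
    using assms(2) by (intro sum.cong) auto
  finally show ?thesis
    by simp
qed

lemma even_card_sym_diff:
  assumes "finite A" "finite B"
  shows "even (card ((A - B) \<union> (B - A))) \<longleftrightarrow> (even (card A) \<longleftrightarrow> even (card B))"
proof -
  have "card A = card (A - B) + card (A \<inter> B)" "card B = card (B - A) + card (A \<inter> B)"
    using assms by (metis Int_commute card_Diff_subset_Int card_Int_Diff inf_le2 add.commute)+
  moreover have "card ((A - B) \<union> (B - A)) = card (A - B) + card (B - A)"
    using assms by (intro card_Un_disjoint) auto
  ultimately show ?thesis
    by presburger
qed

lemma csum_insert:
  assumes "finite a" "i \<notin> a"
  shows "csum x (insert i a) = cadd (x i) (csum x a)"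
  using assms by (simp add: csum_def cadd_def)

lemma csum_Un_disjoint:
  assumes "finite a" "finite b" "a \<inter> b = {}"
  shows "csum x (a \<union> b) = cadd (csum x a) (csum x b)"
  using assms by (simp add: csum_def cadd_def sum.union_disjoint)

lemma csum_sym_diff:
  assumes "finite A" "finite B" and half: "\<And>i j. x i j = 0 \<or> x i j = 1/2"
  shows "csum x ((A - B) \<union> (B - A)) = cadd (csum x A) (csum x B)"
proof
  fix j
  let ?N = "\<lambda>C. card {i\<in>C. x i j \<noteq> 0}"
  have filter_sym_diff: "{i \<in> (A - B) \<union> (B - A). x i j \<noteq> 0} =
      ({i\<in>A. x i j \<noteq> 0} - {i\<in>B. x i j \<noteq> 0}) \<union> ({i\<in>B. x i j \<noteq> 0} - {i\<in>A. x i j \<noteq> 0})"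
    by auto
  have "even (?N ((A - B) \<union> (B - A))) \<longleftrightarrow> even (?N A + ?N B)"
    unfolding filter_sym_diff using assms by (subst even_card_sym_diff) auto
  then have "csum x ((A - B) \<union> (B - A)) j = frac (real (?N A + ?N B) / 2)"
    using assms by (simp add: csum_def sum_half_valued frac_of_nat_half del: of_nat_add)
  also have "\<dots> = cadd (csum x A) (csum x B) j"
    using assms by (simp add: cadd_def csum_def sum_half_valued add_divide_distrib)
  finally show "csum x ((A - B) \<union> (B - A)) j = cadd (csum x A) (csum x B) j" .
qed

lemma cadd_FS1_subset: "cadd (x 0) ` FS1 x \<subseteq> {csum x C | C. finite C \<and> 0 \<in> C}"
proof
  fix z
  assume "z \<in> cadd (x 0) ` FS1 x"
  then obtain b where "finite b" "z = cadd (x 0) (csum (\<lambda>n. x (Suc n)) b)"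
    unfolding FS1_def FS_def by blast
  moreover have "csum (\<lambda>n. x (Suc n)) b = csum x (Suc ` b)"
    by (simp add: csum_def sum.reindex)
  ultimately have "z = csum x (insert 0 (Suc ` b))"
    by (simp add: csum_insert)
  with \<open>finite b\<close> show "z \<in> {csum x C | C. finite C \<and> 0 \<in> C}"
    by blast
qed

theorem mainTheorem8:
  shows "strongly_IP_regular (order2 :: ('k \<Rightarrow> real) set)"
  unfolding strongly_IP_regular_def
proof (intro allI impI notI)
  fix x :: "nat \<Rightarrow> 'k \<Rightarrow> real"
  assume x: "FS_seq order2 x" and "IP_set order2 (cadd (x 0) ` FS1 x)"
  then obtain y where "FS y \<subseteq> cadd (x 0) ` FS1 x"
    unfolding IP_set_def by blast
  then have "\<exists>C. finite C \<and> 0 \<in> C \<and> csum y a = csum x C" if "finite a" "a \<noteq> {}" for a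
    using that cadd_FS1_subset[of x] unfolding FS_def by blast
  then obtain C0 C1 C2 where C: "finite C0" "finite C1" "finite C2" "0 \<in> C0" "0 \<in> C1" "0 \<in> C2"
    and y: "csum y {0} = csum x C0" "csum y {1} = csum x C1" "csum y {0, 1} = csum x C2"
    by (metis finite.emptyI finite.insertI insert_not_empty)
  have half: "x i j = 0 \<or> x i j = 1/2" for i j
    using x unfolding FS_seq_def by (intro order2_coordinate) simp
  have in_order2: "csum x C \<in> order2" if "finite C" "0 \<in> C" for C
    using x that unfolding FS_seq_def by blast
  define D where "D = (((C0 - C1) \<union> (C1 - C0)) - C2) \<union> (C2 - ((C0 - C1) \<union> (C1 - C0)))"
  have "csum x D = cadd (cadd (csum x C0) (csum x C1)) (csum x C2)"
    unfolding D_def using C half by (simp add: csum_sym_diff)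
  also have "cadd (csum x C0) (csum x C1) = csum x C2"
    using csum_Un_disjoint[of "{0}" "{1}" y] y by (simp add: insert_commute)
  also have "cadd (csum x C2) (csum x C2) = czero"
    using in_order2 C by (simp add: order2_def)
  finally have "csum x D = czero" .
  moreover have "csum x D \<in> order2"
    using C by (intro in_order2) (auto simp: D_def)
  ultimately show False
    by (simp add: order2_def)
qed

end
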